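(* Fix $\theta\in\mathcal C$ (and $\lambda>0$, $p\in[1,\infty]$, $\alpha\in(0,1]$). Then: (i) For every $\phi\in\mathcal C$, $\operatorname{dist}_{\beta^{BK}_{\theta,\lambda,p,\alpha}}(\phi,\mathcal X\setminus\mathcal C)=\beta(\phi,\theta)$. (ii) $\overline{\mathcal X\setminus\mathcal C}^{\,\beta^{BK}_{\theta,\lambda,p,\alpha}}\cap \mathcal C=\{\theta\}$. (iii) $\mathcal C$ is $\beta^{BK}_{\theta,\lambda,p,\alpha}$-closed in $\mathcal X$, and $\overline{\mathcal X\setminus\mathcal C}^{\,\beta^{BK}_{\theta,\lambda,p,\alpha}}=(\mathcal X\setminus\mathcal C)\cup\{\theta\}$.
   Context: Let $A$ be a unital $C^*$-algebra, $H$ a Hilbert space, $\mathcal X=\mathrm{CB}(A,B(H))$, $\mathcal C=\mathrm{CP}(A,B(H))$, $\beta$ the Bures distance on $\mathcal C$, $\delta_{\mathrm{reg}}$ the regular-representation metric on $\mathcal X$, $\rho(\phi)=\delta_{\mathrm{reg}}(\phi,0)$ (so $\rho(\phi)\le\|\phi\|_{cb}^{1/2}$ and $\rho(\phi)>0$ for $\phi\neq0$). The BK metric $\beta^{BK}_{\theta,\lambda,p,\alpha}$ satisfies: it equals $\beta$ on $\mathcal C\times\mathcal C$, $\lambda\delta_{\mathrm{reg}}^\alpha$ on pairs of non-CP maps, and $\|(\beta(\phi,\theta),\lambda\rho(\psi)^\alpha)\|_{\ell^p}$ for $\phi\in\mathcal C$, $\psi\notin\mathcal C$ (it is defined as $\bigl\|\bigl(\|\kappa_\theta(\phi)-\kappa_\theta(\psi)\|_\infty,\lambda\widetilde\delta_{\mathrm{reg}}(\phi,\psi)^\alpha\bigr)\bigr\|_{\ell^p}$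 with $\kappa_\theta$ the Kuratowski embedding based at $\theta$, extended by $0$ off $\mathcal C$). *)

theory Defs
  imports "HOL-Analysis.Analysis"
begin

text \<open>The ambient space
  X = CB(A,B(H)) with the cb-norm is modelled by a type 'x of class
  real_normed_vector; C = CP(A,B(H)) is a subset of it; the Bures distance
  beta is a metric on C; the regular-representation metric delta is a metric on X.\<close>

definition lp_pair :: "ereal \<Rightarrow> real \<Rightarrow> real \<Rightarrow> real" where
  "lp_pair p a b =
     (if p = \<infinity> then max \<bar>a\<bar> \<bar>b\<bar>
      else (\<bar>a\<bar> powr (real_of_ereal p) + \<bar>b\<bar> powr (real_of_ereal p)) powr (1 / real_of_ereal p))"

definition kuratowski :: "'x set \<Rightarrow> ('x \<Rightarrow> 'x \<Rightarrow> real) \<Rightarrow> 'x \<Rightarrow> 'x \<Rightarrow> 'x \<Rightarrow> real" where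
  "kuratowski C beta theta phi = (\<lambda>x. if phi \<in> C then beta x phi - beta x theta else 0)"

definition sup_norm_on :: "'x set \<Rightarrow> ('x \<Rightarrow> real) \<Rightarrow> real" where
  "sup_norm_on C f = (SUP x\<in>C. \<bar>f x\<bar>)"

definition delta_tilde :: "'x::zero set \<Rightarrow> ('x \<Rightarrow> 'x \<Rightarrow> real) \<Rightarrow> 'x \<Rightarrow> 'x \<Rightarrow> real" where
  "delta_tilde C delta phi psi =
     delta (if phi \<in> C then 0 else phi) (if psi \<in> C then 0 else psi)"

definition BK_metric ::
  "'x::zero set \<Rightarrow> ('x \<Rightarrow> 'x \<Rightarrow> real) \<Rightarrow> ('x \<Rightarrow> 'x \<Rightarrow> real) \<Rightarrow> 'x \<Rightarrow> real \<Rightarrow> ereal \<Rightarrow> real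
     \<Rightarrow> 'x \<Rightarrow> 'x \<Rightarrow> real" where
  "BK_metric C beta delta theta lam p \<alpha> phi psi =
     lp_pair p
       (sup_norm_on C (\<lambda>x. kuratowski C beta theta phi x - kuratowski C beta theta psi x))
       (lam * delta_tilde C delta phi psi powr \<alpha>)"

definition dist_to_set :: "('x \<Rightarrow> 'x \<Rightarrow> real) \<Rightarrow> 'x \<Rightarrow> 'x set \<Rightarrow> real" where
  "dist_to_set d x S = (INF y\<in>S. d x y)"

end

theory Submission
  imports Defs
begin

text \<open>Off \<open>C\<close> the Kuratowski coordinate of the BK metric only sees \<open>theta\<close> and the
  \<open>delta\<close> coordinate only sees \<open>0\<close>. Hence the BK metric is the pullback of the \<open>l\<^sup>p\<close>
  product of \<open>(C, beta)\<close> and a snowflake of \<open>delta\<close> along the injective map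
  \<open>x \<mapsto> (if x \<in> C then x else theta, if x \<in> C then 0 else x)\<close>, in particular a metric.
  For \<open>phi \<in> C\<close> and \<open>psi \<notin> C\<close> it is the \<open>l\<^sup>p\<close> norm of
  \<open>(beta phi theta, lam * delta 0 psi powr \<alpha>)\<close>, and a pointed nontrivial cone has non-members
  of arbitrarily small norm, so the second entry can be made arbitrarily small: this is (i).
  Consequently a point of \<open>C\<close> is in the closure of the complement iff it is \<open>theta\<close>, while
  a non-member \<open>psi\<close> keeps distance at least \<open>lam * delta 0 psi powr \<alpha> > 0\<close> from \<open>C\<close>.\<close>

lemma powr_add_le_add_powr:
  fixes a b \<alpha> :: real
  assumes "0 \<le> a" "0 \<le> b" "0 < \<alpha>" "\<alpha> \<le> 1"
  shows "(a + b) powr \<alpha> \<le> a powr \<alpha> + b powr \<alpha>"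
proof (cases "a + b = 0")
  case True
  then show ?thesis using assms by simp
next
  case False
  define s where "s = a + b"
  have s: "s > 0" using False assms by (simp add: s_def)
  have "0 \<le> a / s" "a / s \<le> 1" "0 \<le> b / s" "b / s \<le> 1"
    using assms s by (auto simp: s_def)
  then have "a / s \<le> (a / s) powr \<alpha>" "b / s \<le> (b / s) powr \<alpha>"
    using powr_mono'[of \<alpha> 1 "a / s"] powr_mono'[of \<alpha> 1 "b / s"] assms s by auto
  moreover have "a / s + b / s = 1" using s by (simp add: s_def add_divide_distrib[symmetric])
  ultimately have "1 \<le> (a / s) powr \<alpha> + (b / s) powr \<alpha>"
    by linarith
  then have "s powr \<alpha> \<le> s powr \<alpha> * ((a / s) powr \<alpha> + (b / s) powr \<alpha>)"
    using mult_left_mono[of 1 _ "s powr \<alpha>"] by simp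
  also have "\<dots> = a powr \<alpha> + b powr \<alpha>"
    using assms s by (simp add: powr_divide distrib_left)
  finally show ?thesis by (simp add: s_def)
qed

lemma convex_on_powr_nonneg:
  fixes q :: real
  assumes "q \<ge> 1"
  shows "convex_on {0..} (\<lambda>x. x powr q)"
proof (rule convex_on_linorderI)
  fix t x y :: real
  assume t: "0 < t" "t < 1" and xy: "x \<in> {0..}" "y \<in> {0..}" "x < y"
  show "((1 - t) *\<^sub>R x + t *\<^sub>R y) powr q \<le> (1 - t) * x powr q + t * y powr q"
  proof (cases "x = 0")
    case True
    have "t powr q \<le> t powr 1" using t assms by (intro powr_mono') auto
    then have "t powr q * y powr q \<le> t * y powr q" using t by (simp add: mult_right_mono)
    then show ?thesis using True t xy by (simp add: powr_mult)
  next
    case False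
    then show ?thesis using convex_onD[OF powr_convex[OF assms], of t x y] t xy by simp
  qed
qed simp

lemma powr_pair_minkowski:
  fixes q a1 a2 b1 b2 :: real
  assumes q: "q \<ge> 1" and nonneg: "0 \<le> a1" "0 \<le> a2" "0 \<le> b1" "0 \<le> b2"
  shows "((a1 + a2) powr q + (b1 + b2) powr q) powr (1 / q)
    \<le> (a1 powr q + b1 powr q) powr (1 / q) + (a2 powr q + b2 powr q) powr (1 / q)"
proof -
  define N where "N a b = (a powr q + b powr q) powr (1 / q)" for a b :: real
  define A B where "A = N a1 b1" and "B = N a2 b2"
  have N_powr: "N a b powr q = a powr q + b powr q" for a b
    using q by (simp add: N_def powr_powr)
  have N_zero: "a = 0 \<and> b = 0" if "N a b = 0" "0 \<le> a" "0 \<le> b" for a b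
    using N_powr[of a b] that q by (simp add: add_nonneg_eq_0_iff)
  consider "A = 0" | "B = 0" | "A > 0" "B > 0"
    using A_def B_def N_def by fastforce
  then show ?thesis
  proof cases
    case 1
    then show ?thesis using N_zero[of a1 b1] nonneg by (simp add: A_def N_def)
  next
    case 2
    then show ?thesis using N_zero[of a2 b2] nonneg by (simp add: B_def N_def)
  next
    case 3
    txt \<open>The normalised sum is the convex combination, with weight \<open>t\<close>, of the unit vectors
      \<open>(a1, b1) / A\<close> and \<open>(a2, b2) / B\<close>.\<close>
    define t where "t = B / (A + B)"
    have t: "0 \<le> t" "t \<le> 1" "1 - t = A / (A + B)" using 3 by (auto simp: t_def field_simps)
    have comb: "(c1 + c2) / (A + B) = (1 - t) * (c1 / A) + t * (c2 / B)" for c1 c2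
    proof -
      have "A + B \<noteq> 0" using 3 by simp
      then have "(1 - t) * (c1 / A) = c1 / (A + B)" "t * (c2 / B) = c2 / (A + B)"
        using 3 unfolding t(3) by (simp_all add: t_def field_simps)
      then show ?thesis by (simp add: add_divide_distrib)
    qed
    have unit: "(a / N a b) powr q + (b / N a b) powr q = 1" if "N a b > 0" "0 \<le> a" "0 \<le> b" for a b
    proof -
      have "a powr q + b powr q \<noteq> 0" using that(1) N_powr[of a b] by force
      then show ?thesis using that by (simp add: powr_divide add_divide_distrib[symmetric] N_powr)
    qed
    have convex: "((c1 + c2) / (A + B)) powr q \<le> (1 - t) * (c1 / A) powr q + t * (c2 / B) powr q"
      if "0 \<le> c1" "0 \<le> c2" for c1 c2
      using convex_onD[OF convex_on_powr_nonneg[OF q], of t "c1 / A" "c2 / B"] that t 3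
      by (simp add: comb)
    have "((a1 + a2) / (A + B)) powr q + ((b1 + b2) / (A + B)) powr q
        \<le> (1 - t) * ((a1 / A) powr q + (b1 / A) powr q) + t * ((a2 / B) powr q + (b2 / B) powr q)"
      using convex[of a1 a2] convex[of b1 b2] nonneg by (simp add: algebra_simps)
    also have "\<dots> = 1" using unit 3 nonneg by (simp add: A_def B_def)
    finally have "(a1 + a2) powr q + (b1 + b2) powr q \<le> (A + B) powr q"
      using 3 nonneg by (simp add: powr_divide add_divide_distrib[symmetric])
    then have "N (a1 + a2) (b1 + b2) \<le> ((A + B) powr q) powr (1 / q)"
      unfolding N_def using q by (intro powr_mono2) auto
    also have "\<dots> = A + B" using q 3 by (simp add: powr_powr)
    finally show ?thesis by (simp add: N_def A_def B_def)
  qed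
qed

lemma ereal_ge_1_cases:
  assumes "(p :: ereal) \<ge> 1"
  obtains "p = \<infinity>" | q where "p = ereal q" "q \<ge> 1"
  using assms by (cases p) auto

lemma lp_pair_commute: "lp_pair p a b = lp_pair p b a"
  by (simp add: lp_pair_def add.commute max.commute)

lemma abs_le_lp_pair1:
  assumes "p \<ge> 1"
  shows "\<bar>a\<bar> \<le> lp_pair p a b"
  using assms
proof (cases rule: ereal_ge_1_cases)
  case (2 q)
  have "\<bar>a\<bar> = (\<bar>a\<bar> powr q) powr (1 / q)" using 2 by (simp add: powr_powr)
  also have "\<dots> \<le> (\<bar>a\<bar> powr q + \<bar>b\<bar> powr q) powr (1 / q)"
    using 2 by (intro powr_mono2) auto
  finally show ?thesis using 2 by (simp add: lp_pair_def)
qed (simp add: lp_pair_def)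

lemma abs_le_lp_pair2: "p \<ge> 1 \<Longrightarrow> \<bar>b\<bar> \<le> lp_pair p a b"
  using abs_le_lp_pair1 lp_pair_commute by metis

lemma lp_pair_le_abs_add:
  assumes "p \<ge> 1"
  shows "lp_pair p a b \<le> \<bar>a\<bar> + \<bar>b\<bar>"
  using assms
proof (cases rule: ereal_ge_1_cases)
  case (2 q)
  have "(\<bar>a\<bar> powr q + \<bar>b\<bar> powr q) powr (1 / q)
      \<le> (\<bar>a\<bar> powr q) powr (1 / q) + (\<bar>b\<bar> powr q) powr (1 / q)"
    using 2 by (intro powr_add_le_add_powr) auto
  then show ?thesis using 2 by (simp add: lp_pair_def powr_powr)
qed (simp add: lp_pair_def)

lemma lp_pair_zero_right: "p \<ge> 1 \<Longrightarrow> lp_pair p a 0 = \<bar>a\<bar>"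
  using abs_le_lp_pair1 lp_pair_le_abs_add by (metis abs_zero add.right_neutral order_antisym)

lemma lp_pair_nonneg: "p \<ge> 1 \<Longrightarrow> 0 \<le> lp_pair p a b"
  using abs_le_lp_pair1 abs_ge_zero order_trans by metis

lemma lp_pair_eq_0_iff: "p \<ge> 1 \<Longrightarrow> lp_pair p a b = 0 \<longleftrightarrow> a = 0 \<and> b = 0"
  using abs_le_lp_pair1[where a = a and b = b] abs_le_lp_pair2[where a = a and b = b]
    lp_pair_zero_right[where a = 0]
  by fastforce

lemma lp_pair_mono:
  assumes "p \<ge> 1" "\<bar>a\<bar> \<le> \<bar>a'\<bar>" "\<bar>b\<bar> \<le> \<bar>b'\<bar>"
  shows "lp_pair p a b \<le> lp_pair p a' b'"
  using assms(1)
proof (cases rule: ereal_ge_1_cases)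
  case (2 q)
  have "\<bar>a\<bar> powr q + \<bar>b\<bar> powr q \<le> \<bar>a'\<bar> powr q + \<bar>b'\<bar> powr q"
    using assms 2 by (intro add_mono powr_mono2) auto
  then show ?thesis using 2 by (simp add: lp_pair_def powr_mono2)
qed (use assms in \<open>auto simp: lp_pair_def max_def\<close>)

lemma lp_pair_triangle:
  assumes "p \<ge> 1"
  shows "lp_pair p (a1 + a2) (b1 + b2) \<le> lp_pair p a1 b1 + lp_pair p a2 b2"
proof -
  have "lp_pair p (a1 + a2) (b1 + b2) \<le> lp_pair p (\<bar>a1\<bar> + \<bar>a2\<bar>) (\<bar>b1\<bar> + \<bar>b2\<bar>)"
    using assms by (intro lp_pair_mono) auto
  also have "\<dots> \<le> lp_pair p a1 b1 + lp_pair p a2 b2"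
    using assms
  proof (cases rule: ereal_ge_1_cases)
    case (2 q)
    then show ?thesis by (simp add: lp_pair_def powr_pair_minkowski)
  qed (auto simp: lp_pair_def max_def)
  finally show ?thesis .
qed

lemma Metric_space_pullback:
  assumes "Metric_space A d" "f ` M \<subseteq> A" "inj_on f M"
  shows "Metric_space M (\<lambda>x y. d (f x) (f y))"
proof -
  interpret Metric_space A d by fact
  show ?thesis
    using assms(2,3) by unfold_locales (auto simp: commute image_subset_iff inj_on_def intro: triangle)
qed

lemma Metric_space_snowflake:
  assumes "Metric_space M d" "0 < \<alpha>" "\<alpha> \<le> 1" "0 < c"
  shows "Metric_space M (\<lambda>x y. c * d x y powr \<alpha>)"
proof -
  interpret Metric_space M d by fact
  show ?thesis
  proof
    fix x y z
    assume xyz: "x \<in> M" "y \<in> M" "z \<in> M"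
    have "d x z powr \<alpha> \<le> (d x y + d y z) powr \<alpha>"
      using assms xyz triangle by (intro powr_mono2) auto
    also have "\<dots> \<le> d x y powr \<alpha> + d y z powr \<alpha>"
      using assms by (intro powr_add_le_add_powr) auto
    finally show "c * d x z powr \<alpha> \<le> c * d x y powr \<alpha> + c * d y z powr \<alpha>"
      using assms by (simp add: distrib_left[symmetric])
  qed (use assms commute in auto)
qed

definition lp_product_dist ::
  "ereal \<Rightarrow> ('a \<Rightarrow> 'a \<Rightarrow> real) \<Rightarrow> ('b \<Rightarrow> 'b \<Rightarrow> real) \<Rightarrow> 'a \<times> 'b \<Rightarrow> 'a \<times> 'b \<Rightarrow> real" where
  "lp_product_dist p d1 d2 x y = lp_pair p (d1 (fst x) (fst y)) (d2 (snd x) (snd y))"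

lemma Metric_space_lp_product:
  assumes "Metric_space A d1" "Metric_space B d2" "p \<ge> 1"
  shows "Metric_space (A \<times> B) (lp_product_dist p d1 d2)"
proof -
  interpret d1: Metric_space A d1 by fact
  interpret d2: Metric_space B d2 by fact
  show ?thesis
  proof
    fix x y z :: "'a \<times> 'b"
    show "0 \<le> lp_product_dist p d1 d2 x y"
      unfolding lp_product_dist_def using assms(3) by (rule lp_pair_nonneg)
    show "lp_product_dist p d1 d2 x y = lp_product_dist p d1 d2 y x"
      by (simp add: lp_product_dist_def d1.commute d2.commute)
    assume xy: "x \<in> A \<times> B" "y \<in> A \<times> B"
    then show "lp_product_dist p d1 d2 x y = 0 \<longleftrightarrow> x = y"
      by (auto simp: lp_product_dist_def lp_pair_eq_0_iff[OF assms(3)] prod_eq_iff)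
    assume "z \<in> A \<times> B"
    then have "lp_product_dist p d1 d2 x z
        \<le> lp_pair p (d1 (fst x) (fst y) + d1 (fst y) (fst z)) (d2 (snd x) (snd y) + d2 (snd y) (snd z))"
      unfolding lp_product_dist_def using xy assms(3)
      by (intro lp_pair_mono) (auto intro: d1.triangle d2.triangle)
    also have "\<dots> \<le> lp_product_dist p d1 d2 x y + lp_product_dist p d1 d2 y z"
      unfolding lp_product_dist_def using assms(3) by (rule lp_pair_triangle)
    finally show "lp_product_dist p d1 d2 x z \<le> lp_product_dist p d1 d2 x y + lp_product_dist p d1 d2 y z" .
  qed
qed

lemma (in Metric_space) SUP_abs_mdist_diff:
  assumes "a \<in> M" "b \<in> M"
  shows "(SUP x\<in>M. \<bar>d x a - d x b\<bar>) = d a b"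
proof (rule cSup_eq_maximum)
  show "d a b \<in> (\<lambda>x. \<bar>d x a - d x b\<bar>) ` M"
    using assms by (intro image_eqI[where x = a]) auto
  show "y \<le> d a b" if "y \<in> (\<lambda>x. \<bar>d x a - d x b\<bar>) ` M" for y
    using that assms mdist_reverse_triangle[of a _ b] by (auto simp: commute[of _ a])
qed

lemma dist_to_set_eqI:
  assumes "\<And>y. y \<in> S \<Longrightarrow> a \<le> d x y" and "\<And>e. 0 < e \<Longrightarrow> \<exists>y\<in>S. d x y < a + e"
  shows "dist_to_set d x S = a"
  unfolding dist_to_set_def
proof (rule antisym)
  have "S \<noteq> {}" using assms(2)[of 1] by auto
  then show "a \<le> (INF y\<in>S. d x y)" using assms(1) by (rule cINF_greatest)
  have bdd: "bdd_below (d x ` S)" by (rule bdd_belowI2[OF assms(1)])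
  show "(INF y\<in>S. d x y) \<le> a"
  proof (rule field_le_epsilon)
    fix e :: real assume "0 < e"
    then obtain y where "y \<in> S" "d x y < a + e" using assms(2) by blast
    then show "(INF y\<in>S. d x y) \<le> a + e" using bdd by (intro cINF_lower2) auto
  qed
qed

lemma (in Metric_space) in_closure_of_iff_dist_to_set:
  assumes "S \<subseteq> M" "S \<noteq> {}" "x \<in> M"
  shows "x \<in> mtopology closure_of S \<longleftrightarrow> dist_to_set d x S = 0"
proof -
  have bdd: "bdd_below (d x ` S)" by (auto intro: bdd_belowI2[where m = 0])
  have "x \<in> mtopology closure_of S \<longleftrightarrow> (\<forall>r>0. \<exists>y\<in>S. d x y < r)"
    using assms by (fastforce simp: metric_closure_of)
  also have "\<dots> \<longleftrightarrow> dist_to_set d x S = 0"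
  proof
    assume "\<forall>r>0. \<exists>y\<in>S. d x y < r"
    then show "dist_to_set d x S = 0" by (intro dist_to_set_eqI) auto
  next
    assume "dist_to_set d x S = 0"
    then show "\<forall>r>0. \<exists>y\<in>S. d x y < r"
      using cINF_less_iff[OF assms(2) bdd] by (auto simp: dist_to_set_def)
  qed
  finally show ?thesis .
qed

definition collapse :: "'a set \<Rightarrow> 'a \<Rightarrow> 'a \<Rightarrow> 'a" where
  "collapse S c x = (if x \<in> S then x else c)"

definition BK_embedding :: "'x::zero set \<Rightarrow> 'x \<Rightarrow> 'x \<Rightarrow> 'x \<times> 'x" where
  "BK_embedding C theta x = (collapse C theta x, collapse (- C) 0 x)"

lemma BK_metric_eq_lp_product_dist:
  assumes "Metric_space C beta" "theta \<in> C"
  shows "BK_metric C beta delta theta lam p \<alpha> phi psi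
    = lp_product_dist p beta (\<lambda>x y. lam * delta x y powr \<alpha>)
        (BK_embedding C theta phi) (BK_embedding C theta psi)"
proof -
  interpret Metric_space C beta by fact
  have "kuratowski C beta theta chi x = beta x (collapse C theta chi) - beta x theta" for chi x
    by (simp add: kuratowski_def collapse_def)
  then have "sup_norm_on C (\<lambda>x. kuratowski C beta theta phi x - kuratowski C beta theta psi x)
      = (SUP x\<in>C. \<bar>beta x (collapse C theta phi) - beta x (collapse C theta psi)\<bar>)"
    by (simp add: sup_norm_on_def)
  also have "\<dots> = beta (collapse C theta phi) (collapse C theta psi)"
    using assms(2) by (intro SUP_abs_mdist_diff) (auto simp: collapse_def)
  finally show ?thesis
    by (simp add: BK_metric_def lp_product_dist_def BK_embedding_def delta_tilde_def collapse_def)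
qed

locale BK_setting =
  beta: Metric_space C beta + delta: Metric_space UNIV delta
  for C :: "'x::zero set" and beta delta :: "'x \<Rightarrow> 'x \<Rightarrow> real" +
  fixes theta :: 'x and lam :: real and p :: ereal and \<alpha> :: real
  assumes theta_in_C: "theta \<in> C" and zero_in_C: "0 \<in> C"
    and lam_pos: "0 < lam" and p_ge_1: "1 \<le> p" and \<alpha>_pos: "0 < \<alpha>" and \<alpha>_le_1: "\<alpha> \<le> 1"
begin

abbreviation bk :: "'x \<Rightarrow> 'x \<Rightarrow> real" where
  "bk \<equiv> BK_metric C beta delta theta lam p \<alpha>"

lemma inj_BK_embedding: "inj (BK_embedding C theta)"
  using zero_in_C by (intro injI) (auto simp: BK_embedding_def collapse_def split: if_splits)

sublocale bk: Metric_space UNIV bk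
proof -
  have "Metric_space (C \<times> UNIV) (lp_product_dist p beta (\<lambda>x y. lam * delta x y powr \<alpha>))"
    using lam_pos p_ge_1 \<alpha>_pos \<alpha>_le_1
    by (intro Metric_space_lp_product Metric_space_snowflake) unfold_locales
  then have "Metric_space UNIV (\<lambda>phi psi. lp_product_dist p beta (\<lambda>x y. lam * delta x y powr \<alpha>)
      (BK_embedding C theta phi) (BK_embedding C theta psi))"
    by (rule Metric_space_pullback[OF _ _ inj_BK_embedding])
      (use theta_in_C in \<open>auto simp: BK_embedding_def collapse_def\<close>)
  then show "Metric_space UNIV bk"
    using BK_metric_eq_lp_product_dist[OF beta.Metric_space_axioms theta_in_C] by presburger
qed

lemma bk_C_notC:
  "phi \<in> C \<Longrightarrow> psi \<notin> C \<Longrightarrow> bk phi psi = lp_pair p (beta phi theta) (lam * delta 0 psi powr \<alpha>)"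
  using BK_metric_eq_lp_product_dist[OF beta.Metric_space_axioms theta_in_C]
  by (simp add: lp_product_dist_def BK_embedding_def collapse_def)

lemma dist_to_complement:
  assumes approx: "\<And>\<eta>. 0 < \<eta> \<Longrightarrow> \<exists>psi. psi \<notin> C \<and> delta 0 psi < \<eta>" and phi: "phi \<in> C"
  shows "dist_to_set bk phi (UNIV - C) = beta phi theta"
proof (rule dist_to_set_eqI)
  show "beta phi theta \<le> bk phi psi" if "psi \<in> UNIV - C" for psi
    using that abs_le_lp_pair1[OF p_ge_1, of "beta phi theta"] bk_C_notC[OF phi] by simp
  fix e :: real assume "0 < e"
  then obtain psi where psi: "psi \<notin> C" "delta 0 psi < (e / lam) powr (1 / \<alpha>)"
    using approx[of "(e / lam) powr (1 / \<alpha>)"] lam_pos by auto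
  then have "delta 0 psi powr \<alpha> < ((e / lam) powr (1 / \<alpha>)) powr \<alpha>"
    using \<alpha>_pos by (intro powr_less_mono2) auto
  also have "\<dots> = e / lam" using \<open>0 < e\<close> lam_pos \<alpha>_pos by (simp add: powr_powr)
  finally have "lam * delta 0 psi powr \<alpha> < e" using lam_pos by (simp add: field_simps)
  have "bk phi psi \<le> \<bar>beta phi theta\<bar> + \<bar>lam * delta 0 psi powr \<alpha>\<bar>"
    using bk_C_notC[OF phi psi(1)]
      lp_pair_le_abs_add[OF p_ge_1, of "beta phi theta" "lam * delta 0 psi powr \<alpha>"] by simp
  also have "\<dots> < beta phi theta + e" using \<open>lam * delta 0 psi powr \<alpha> < e\<close> lam_pos by simp
  finally have "bk phi psi < beta phi theta + e" .
  then show "\<exists>psi\<in>UNIV - C. bk phi psi < beta phi theta + e" using psi by blast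
qed

lemma closure_complement_Int_C:
  assumes approx: "\<And>\<eta>. 0 < \<eta> \<Longrightarrow> \<exists>psi. psi \<notin> C \<and> delta 0 psi < \<eta>"
  shows "bk.mtopology closure_of (UNIV - C) \<inter> C = {theta}"
proof -
  have "UNIV - C \<noteq> {}" using approx[of 1] by auto
  then have "phi \<in> bk.mtopology closure_of (UNIV - C) \<longleftrightarrow> phi = theta" if "phi \<in> C" for phi
    using that theta_in_C by (simp add: bk.in_closure_of_iff_dist_to_set dist_to_complement[OF approx])
  then show ?thesis using theta_in_C by blast
qed

lemma closedin_C: "closedin bk.mtopology C"
proof -
  have "C \<noteq> {}" using theta_in_C by blast
  have "psi \<notin> bk.mtopology closure_of C" if "psi \<notin> C" for psi
  proof -
    have "psi \<noteq> 0" using that zero_in_C by blast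
    then have "0 < lam * delta 0 psi powr \<alpha>" using lam_pos by simp
    also have "\<dots> \<le> dist_to_set bk psi C"
      unfolding dist_to_set_def
    proof (rule cINF_greatest)
      show "C \<noteq> {}" by fact
      show "lam * delta 0 psi powr \<alpha> \<le> bk psi phi" if "phi \<in> C" for phi
        using bk_C_notC[OF that \<open>psi \<notin> C\<close>] abs_le_lp_pair2[OF p_ge_1] bk.commute[of psi phi]
        by (metis abs_ge_self order_trans)
    qed
    finally show ?thesis using \<open>C \<noteq> {}\<close> by (auto simp: bk.in_closure_of_iff_dist_to_set)
  qed
  then show ?thesis by (auto simp: closure_of_subset_eq[symmetric])
qed

lemma closure_complement:
  assumes approx: "\<And>\<eta>. 0 < \<eta> \<Longrightarrow> \<exists>psi. psi \<notin> C \<and> delta 0 psi < \<eta>"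
  shows "bk.mtopology closure_of (UNIV - C) = (UNIV - C) \<union> {theta}"
  using closure_complement_Int_C[OF approx] closure_of_subset[of "UNIV - C" bk.mtopology] by auto

end

lemma pointed_cone_complement_near_zero:
  fixes C :: "'a::real_normed_vector set"
  assumes cone: "\<And>phi t. phi \<in> C \<Longrightarrow> t \<ge> 0 \<Longrightarrow> t *\<^sub>R phi \<in> C"
    and pointed: "\<And>phi. phi \<in> C \<Longrightarrow> - phi \<in> C \<Longrightarrow> phi = 0"
    and phi: "phi \<in> C" "phi \<noteq> 0" and e: "0 < e"
  shows "\<exists>psi. psi \<notin> C \<and> norm psi < e"
proof -
  define t where "t = e / (2 * norm phi)"
  have t: "0 < t" using phi e by (simp add: t_def)
  have "- (t *\<^sub>R phi) \<notin> C"
  proof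
    assume "- (t *\<^sub>R phi) \<in> C"
    then have "- phi \<in> C" using cone[of "- (t *\<^sub>R phi)" "1 / t"] t by simp
    then show False using pointed phi by blast
  qed
  moreover have "norm (- (t *\<^sub>R phi)) < e" using t e phi by (simp add: t_def)
  ultimately show ?thesis by blast
qed


theorem proposition5p6:
  fixes C :: "'x::real_normed_vector set"
    and beta delta :: "'x \<Rightarrow> 'x \<Rightarrow> real"
    and theta :: 'x and lam \<alpha> :: real and p :: ereal
  assumes cone: "\<And>phi t. phi \<in> C \<Longrightarrow> t \<ge> 0 \<Longrightarrow> scaleR t phi \<in> C"
    and pointed: "\<And>phi. phi \<in> C \<Longrightarrow> - phi \<in> C \<Longrightarrow> phi = 0"
    and nontriv: "\<exists>phi\<in>C. phi \<noteq> 0"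
    and beta_metric: "Metric_space C beta"
    and delta_metric: "Metric_space UNIV delta"
    and rho_le: "\<And>phi. delta phi 0 \<le> sqrt (norm phi)"
    and theta: "theta \<in> C"
    and lam: "lam > 0" and p: "p \<ge> 1" and \<alpha>: "0 < \<alpha>" "\<alpha> \<le> 1"
  defines "bk \<equiv> BK_metric C beta delta theta lam p \<alpha>"
  shows "(\<forall>phi\<in>C. dist_to_set bk phi (UNIV - C) = beta phi theta)
       \<and> (Metric_space.mtopology UNIV bk) closure_of (UNIV - C) \<inter> C = {theta}
       \<and> closedin (Metric_space.mtopology UNIV bk) C
       \<and> (Metric_space.mtopology UNIV bk) closure_of (UNIV - C) = (UNIV - C) \<union> {theta}"
proof -
  have "0 \<in> C" using cone[OF theta, of 0] by simp
  then interpret BK_setting C beta delta theta lam p \<alpha>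
    using beta_metric delta_metric theta lam p \<alpha> by (simp add: BK_setting_def BK_setting_axioms_def)
  have approx: "\<exists>psi. psi \<notin> C \<and> delta 0 psi < \<eta>" if "0 < \<eta>" for \<eta>
  proof -
    obtain phi0 where "phi0 \<in> C" "phi0 \<noteq> 0" using nontriv by blast
    then have "\<exists>psi. psi \<notin> C \<and> norm psi < \<eta>\<^sup>2"
      using cone pointed that by (intro pointed_cone_complement_near_zero) auto
    then obtain psi where psi: "psi \<notin> C" "norm psi < \<eta>\<^sup>2" by blast
    have "delta 0 psi \<le> sqrt (norm psi)" using rho_le[of psi] delta.commute[of 0 psi] by simp
    also have "\<dots> < \<eta>" using psi that real_sqrt_less_mono[of "norm psi" "\<eta>\<^sup>2"] by simp
    finally show ?thesis using psi(1) by blast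
  qed
  show ?thesis
    unfolding bk_def
    using dist_to_complement[OF approx] closure_complement_Int_C[OF approx] closedin_C
      closure_complement[OF approx]
    by blast
qed

end
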